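(* Let $p$ be an odd prime, let $L/\mathbb{Q}_p$ be a finite unramified extension with ring of integers $\mathcal{O}_L$ and maximal ideal $\mathfrak{m}_L$. Let $F\in \mathcal{O}_L\langle\langle t\rangle\rangle$ be non-zero. Then $F$ has only finitely many zeroes in $\mathfrak{m}_L$. Moreover, if $k\ge 1$ and the reduction $\overline{F}\in (\mathcal{O}_L/\mathfrak{m}_L^k)\langle\langle t\rangle\rangle$ is non-zero, then the number of zeroes of $F$ in $\mathfrak{m}_L$ is bounded by a constant depending only on $\overline{F}$; that is, for every $k\ge1$ and every non-zero $G\in(\mathcal{O}_L/\mathfrak{m}_L^k)\langle\langle t\rangle\rangle$ there is $N(G)$ such that every $F\in\mathcal{O}_L\langle\langle t\rangle\rangle$ with $\overline{F}=G$ has at most $N(G)$ zeroes in $\mathfrak{m}_L$.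
   Context: For a commutative ring $R$, the divided power algebra $R\langle\langle t\rangle\rangle$ consists of formal sums $\sum_{n\ge0} a_n t^{[n]}$ with $a_n\in R$, with multiplication $t^{[n]}t^{[m]}=\binom{n+m}{n}t^{[n+m]}$. For $R=\mathcal{O}_L$ we regard $\mathcal{O}_L\langle\langle t\rangle\rangle$ as a subring of $L[[t]]$ via $t^{[n]}\mapsto t^n/n!$; such series converge on $\mathfrak{m}_L$ (as $p$ is odd and $L$ unramified), and a zero of $F$ in $\mathfrak{m}_L$ means a point $x\in\mathfrak{m}_L$ with $F(x)=\sum a_n x^n/n!=0$. The reduction map $\mathcal{O}_L\langle\langle t\rangle\rangle\to(\mathcal{O}_L/\mathfrak{m}_L^k)\langle\langle t\rangle\rangle$, $F\mapsto\overline{F}$, reduces each coefficient $a_n$ modulo $\mathfrak{m}_L^k$ and sends $t^{[n]}\mapsto t^{[n]}$. *)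

theory Defs
  imports Main "HOL-Computational_Algebra.Primes"
begin

(* A field L is modelled abstractly by its normalised discrete valuation
   v :: L => int (the value v 0 is irrelevant; 0 has valuation +infinity). *)

definition vge :: "('a::field \<Rightarrow> int) \<Rightarrow> 'a \<Rightarrow> int \<Rightarrow> bool" where
  "vge v x n \<longleftrightarrow> x = 0 \<or> n \<le> v x"

definition vcong :: "('a::field \<Rightarrow> int) \<Rightarrow> 'a \<Rightarrow> 'a \<Rightarrow> nat \<Rightarrow> bool" where
  "vcong v x y k \<longleftrightarrow> vge v (x - y) (int k)"

definition vconv :: "('a::field \<Rightarrow> int) \<Rightarrow> (nat \<Rightarrow> 'a) \<Rightarrow> 'a \<Rightarrow> bool" where
  "vconv v s l \<longleftrightarrow> (\<forall>M::int. \<exists>N. \<forall>n\<ge>N. vge v (s n - l) M)"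

(* L is a finite unramified extension of Q_p: a complete discretely valued field of
   characteristic 0 (type class), with finite residue field, and p a uniformiser
   (v normalised with v p = 1).  Such fields are exactly the finite unramified
   extensions of Q_p. *)
definition unram_padic_field :: "nat \<Rightarrow> ('a::field_char_0 \<Rightarrow> int) \<Rightarrow> bool" where
  "unram_padic_field p v \<longleftrightarrow>
     (\<forall>x y. x \<noteq> 0 \<longrightarrow> y \<noteq> 0 \<longrightarrow> v (x * y) = v x + v y) \<and>
     (\<forall>x y. x \<noteq> 0 \<longrightarrow> y \<noteq> 0 \<longrightarrow> x + y \<noteq> 0 \<longrightarrow> min (v x) (v y) \<le> v (x + y)) \<and>
     v (of_nat p) = 1 \<and>
     (\<exists>S. finite S \<and> (\<forall>x. vge v x 0 \<longrightarrow> (\<exists>s\<in>S. vge v (x - s) 1))) \<and>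
     (\<forall>s. (\<forall>M::int. \<exists>N. \<forall>m\<ge>N. \<forall>n\<ge>N. vge v (s m - s n) M) \<longrightarrow> (\<exists>l. vconv v s l))"

(* an element of O_L<<t>>, given by its coefficient sequence a (F = sum a_n t^[n]) *)
definition dp_integral :: "('a::field \<Rightarrow> int) \<Rightarrow> (nat \<Rightarrow> 'a) \<Rightarrow> bool" where
  "dp_integral v a \<longleftrightarrow> (\<forall>n. vge v (a n) 0)"

definition dp_zeros :: "('a::field_char_0 \<Rightarrow> int) \<Rightarrow> (nat \<Rightarrow> 'a) \<Rightarrow> 'a set" where
  "dp_zeros v a = {x. vge v x 1 \<and> vconv v (\<lambda>N. \<Sum>n<N. a n * x ^ n / fact n) 0}"

end

theory Submission
  imports Defs
begin

(* A Strassmann-type argument.  Write F = sum c_n t^n with c_n = a_n / n!.  For p odd,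
   v(n!) <= n/2, so the "Newton weight" v(c_n) + n of an integral F grows at least like n/2
   and has a largest minimising index N, bounded by 2 (v(a_m) + m) for every m with a_m <> 0.
   If x_0, ..., x_N were distinct zeros in m_L, the divided difference of F at these points
   would vanish; but it equals sum_{n >= N} c_n h_{n-N}(x_0, ..., x_N), with h the complete
   homogeneous symmetric polynomials, and there the term c_N strictly dominates all others in
   valuation.  Hence F has at most N zeros, and if F is non-zero modulo m_L^k at the
   coefficient a_m, then v(a_m) < k and the bound 2 (k + m) depends only on the reduction. *)

fun complete_hom :: "'a::comm_ring_1 list \<Rightarrow> nat \<Rightarrow> 'a" where
  "complete_hom [] 0 = 1"
| "complete_hom [] (Suc d) = 0"
| "complete_hom (x # xs) 0 = 1"
| "complete_hom (x # xs) (Suc d) = complete_hom xs (Suc d) + x * complete_hom (x # xs) d"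

lemma complete_hom_0 [simp]: "complete_hom xs 0 = 1"
  by (cases xs) auto

lemma complete_hom_singleton: "complete_hom [x] n = x ^ n"
  by (induction n) auto

lemma complete_hom_Suc_diff:
  "complete_hom (x # zs) (Suc d) - complete_hom (y # zs) (Suc d) = (x - y) * complete_hom (x # y # zs) d"
proof (induction d)
  case (Suc d)
  have "complete_hom (x # zs) (Suc (Suc d)) - complete_hom (y # zs) (Suc (Suc d))
      = (x - y) * complete_hom (y # zs) (Suc d)
        + x * (complete_hom (x # zs) (Suc d) - complete_hom (y # zs) (Suc d))"
    by (simp add: algebra_simps)
  also have "\<dots> = (x - y) * (complete_hom (y # zs) (Suc d) + x * complete_hom (x # y # zs) d)"
    by (simp only: Suc) (simp add: algebra_simps)
  finally show ?case by simp
qed simp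

fun divided_diff :: "('a::field \<Rightarrow> 'a) \<Rightarrow> 'a list \<Rightarrow> 'a" where
  "divided_diff f [] = 0"
| "divided_diff f [x] = f x"
| "divided_diff f (x # y # zs) = (divided_diff f (x # zs) - divided_diff f (y # zs)) / (x - y)"

lemma divided_diff_induct [case_names Nil single step]:
  fixes P :: "'a::field list \<Rightarrow> bool"
  assumes "P []" and "\<And>x. P [x]" and "\<And>x y zs. P (x # zs) \<Longrightarrow> P (y # zs) \<Longrightarrow> P (x # y # zs)"
  shows "P xs"
  by (rule divided_diff.induct[of "\<lambda>_. P" undefined]) (use assms in auto)

lemma divided_diff_sum: "divided_diff (\<lambda>x. \<Sum>n\<in>A. g n x) xs = (\<Sum>n\<in>A. divided_diff (g n) xs)"
  by (induction xs rule: divided_diff_induct)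
    (auto simp: sum_subtractf[symmetric] sum_divide_distrib)

lemma divided_diff_cmult: "divided_diff (\<lambda>x. c * f x) xs = c * divided_diff f xs"
  by (induction xs rule: divided_diff_induct) (auto simp: algebra_simps diff_divide_distrib)

lemma divided_diff_power:
  assumes "distinct xs" and "length xs = Suc L"
  shows "divided_diff (\<lambda>x. x ^ n) xs = (if n < L then 0 else complete_hom xs (n - L))"
  using assms
proof (induction xs arbitrary: L rule: divided_diff_induct)
  case (single x)
  then show ?case by (simp add: complete_hom_singleton)
next
  case (step x y zs)
  then obtain K where K: "L = Suc K" "length zs = K" by auto
  have IH: "divided_diff (\<lambda>x. x ^ n) (u # zs) = (if n < K then 0 else complete_hom (u # zs) (n - K))"
    if "u \<in> {x, y}" for u
    using step K that by auto
  show ?case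
  proof (cases "n < L")
    case True
    then show ?thesis using IH K by (cases "n < K") (auto simp: less_Suc_eq)
  next
    case False
    then have "n - K = Suc (n - L)" using K by simp
    then have "divided_diff (\<lambda>x. x ^ n) (x # y # zs)
        = (complete_hom (x # zs) (Suc (n - L)) - complete_hom (y # zs) (Suc (n - L))) / (x - y)"
      using IH False K by (simp del: complete_hom.simps)
    also have "\<dots> = complete_hom (x # y # zs) (n - L)"
      using step.prems by (simp only: complete_hom_Suc_diff) simp
    finally show ?thesis using False by simp
  qed
qed simp

lemma divided_diff_polynomial:
  assumes "distinct xs" and "length xs = Suc L" and "L < M"
  shows "divided_diff (\<lambda>x. \<Sum>n<M. c n * x ^ n) xs
           = c L + (\<Sum>n\<in>{L<..<M}. c n * complete_hom xs (n - L))"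
proof -
  have "divided_diff (\<lambda>x. \<Sum>n<M. c n * x ^ n) xs = (\<Sum>n<M. c n * divided_diff (\<lambda>x. x ^ n) xs)"
    by (simp add: divided_diff_sum divided_diff_cmult)
  also have "\<dots> = (\<Sum>n<M. if n < L then 0 else c n * complete_hom xs (n - L))"
    by (intro sum.cong) (simp_all add: divided_diff_power[OF assms(1,2)])
  also have "\<dots> = (\<Sum>n\<in>{L..<M}. c n * complete_hom xs (n - L))"
    by (rule sum.mono_neutral_cong_right) auto
  also have "\<dots> = c L + (\<Sum>n\<in>{L<..<M}. c n * complete_hom xs (n - L))"
    using assms(3) by (simp add: sum.atLeast_Suc_lessThan atLeastSucLessThan_greaterThanLessThan)
  finally show ?thesis .
qed

lemma obtain_last_minimiser:
  fixes W :: "nat \<Rightarrow> 'b::linorder"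
  assumes "P m" and "finite {n. P n \<and> W n \<le> W m}"
  obtains N where "P N" "W N \<le> W m" "\<And>n. N < n \<Longrightarrow> P n \<Longrightarrow> W N < W n"
proof -
  define S where "S = {n. P n \<and> W n \<le> W m}"
  have "m \<in> S" "finite S" using assms unfolding S_def by auto
  define T where "T = {n \<in> S. W n = Min (W ` S)}"
  have "Min (W ` S) \<in> W ` S" using \<open>finite S\<close> \<open>m \<in> S\<close> by (intro Min_in) auto
  then have "finite T" "T \<noteq> {}" using \<open>finite S\<close> unfolding T_def by auto
  define N where "N = Max T"
  have "N \<in> T" unfolding N_def using \<open>finite T\<close> \<open>T \<noteq> {}\<close> by (rule Max_in)
  have min: "W N \<le> W n" if "n \<in> S" for n
    using \<open>N \<in> T\<close> \<open>finite S\<close> that unfolding T_def by simp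
  show ?thesis
  proof
    show "P N" "W N \<le> W m" using \<open>N \<in> T\<close> unfolding T_def S_def by auto
    fix n assume "N < n" "P n"
    show "W N < W n"
    proof (cases "n \<in> S")
      case True
      have "n \<notin> T" using \<open>N < n\<close> \<open>finite T\<close> unfolding N_def by (auto dest: Max_ge)
      then show ?thesis using min[OF True] True \<open>N \<in> T\<close> unfolding T_def by auto
    next
      case False
      then show ?thesis using \<open>P n\<close> min[OF \<open>m \<in> S\<close>] unfolding S_def by auto
    qed
  qed
qed

definition ps_zeros :: "('a::field \<Rightarrow> int) \<Rightarrow> (nat \<Rightarrow> 'a) \<Rightarrow> 'a set" where
  "ps_zeros v c = {x. vge v x 1 \<and> vconv v (\<lambda>M. \<Sum>n<M. c n * x ^ n) 0}"

locale nonarch_valuation =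
  fixes v :: "'a::field \<Rightarrow> int"
  assumes v_mult: "x \<noteq> 0 \<Longrightarrow> y \<noteq> 0 \<Longrightarrow> v (x * y) = v x + v y"
    and v_add: "x \<noteq> 0 \<Longrightarrow> y \<noteq> 0 \<Longrightarrow> x + y \<noteq> 0 \<Longrightarrow> min (v x) (v y) \<le> v (x + y)"
begin

lemma v_one [simp]: "v 1 = 0"
  using v_mult[of 1 1] by simp

lemma v_minus [simp]: "v (- x) = v x"
proof -
  have "v (-1) = 0" using v_mult[of "-1" "-1"] by simp
  then show ?thesis using v_mult[of "-1" x] by (cases "x = 0") auto
qed

lemma v_divide: "x \<noteq> 0 \<Longrightarrow> y \<noteq> 0 \<Longrightarrow> v (x / y) = v x - v y"
  using v_mult[of "x / y" y] by simp

lemma vge_zero [simp]: "vge v 0 n"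
  by (simp add: vge_def)

lemma vge_self: "vge v x (v x)"
  by (simp add: vge_def)

lemma vge_mono: "vge v x n \<Longrightarrow> m \<le> n \<Longrightarrow> vge v x m"
  by (auto simp: vge_def)

lemma vge_add:
  assumes "vge v x n" and "vge v y n"
  shows "vge v (x + y) n"
proof (cases "x = 0 \<or> y = 0 \<or> x + y = 0")
  case False
  then show ?thesis using assms v_add[of x y] by (simp add: vge_def)
qed (use assms in auto)

lemma vge_minus: "vge v x n \<Longrightarrow> vge v (- x) n"
  by (simp add: vge_def)

lemma vge_diff: "vge v x n \<Longrightarrow> vge v y n \<Longrightarrow> vge v (x - y) n"
  using vge_add[of x n "- y"] vge_minus[of y n] by simp

lemma vge_mult: "vge v x m \<Longrightarrow> vge v y n \<Longrightarrow> vge v (x * y) (m + n)"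
  unfolding vge_def using v_mult[of x y] by (cases "x = 0"; cases "y = 0") auto

lemma vge_sum: "(\<And>i. i \<in> A \<Longrightarrow> vge v (f i) n) \<Longrightarrow> vge v (sum f A) n"
proof (induction A rule: infinite_finite_induct)
  case (insert x F)
  then show ?case by (simp add: vge_add)
qed simp_all

lemma vge_one [simp]: "vge v 1 0"
  by (simp add: vge_def)

lemma vge_of_nat: "vge v (of_nat k) 0"
  by (induction k) (simp_all add: vge_add[of 1 0])

lemma vge_of_int: "vge v (of_int z) 0"
proof (cases "z \<ge> 0")
  case True
  then show ?thesis using vge_of_nat[of "nat z"] by simp
next
  case False
  then show ?thesis using vge_minus[OF vge_of_nat[of "nat (- z)"]] by simp
qed

lemma not_vcong_zero:
  assumes "vcong v x y k" and "\<not> vcong v y 0 k"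
  shows "x \<noteq> 0 \<and> v x < int k"
proof -
  have "\<not> vge v (x - (x - y)) (int k)" using assms(2) by (simp add: vcong_def)
  then have "\<not> vge v x (int k)" using assms(1) vge_diff unfolding vcong_def by blast
  then show ?thesis by (auto simp: vge_def)
qed

lemma vconv_diff: "vconv v s 0 \<Longrightarrow> vconv v t 0 \<Longrightarrow> vconv v (\<lambda>M. s M - t M) 0"
  unfolding vconv_def by (metis (no_types, lifting) diff_0_right max.boundedE vge_diff)

lemma vconv_divide:
  assumes "vconv v s 0"
  shows "vconv v (\<lambda>M. s M / c) 0"
proof (cases "c = 0")
  case False
  show ?thesis unfolding vconv_def
  proof
    fix K
    obtain N where "\<forall>n\<ge>N. vge v (s n) (K - v (inverse c))"
      using assms unfolding vconv_def by fastforce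
    then have "\<forall>n\<ge>N. vge v (s n * inverse c) (K - v (inverse c) + v (inverse c))"
      using vge_mult vge_self by blast
    then show "\<exists>N. \<forall>n\<ge>N. vge v (s n / c - 0) K" by (auto simp: divide_inverse)
  qed
qed (simp add: vconv_def)

lemma vconv_divided_diff:
  "(\<And>x. x \<in> set xs \<Longrightarrow> vconv v (\<lambda>M. s M x) 0) \<Longrightarrow> vconv v (\<lambda>M. divided_diff (s M) xs) 0"
proof (induction xs rule: divided_diff_induct)
  case (step x y zs)
  then have "vconv v (\<lambda>M. (divided_diff (s M) (x # zs) - divided_diff (s M) (y # zs)) / (x - y)) 0"
    by (intro vconv_divide vconv_diff) auto
  then show ?case by simp
qed (auto simp: vconv_def)

lemma vge_complete_hom: "(\<And>x. x \<in> set xs \<Longrightarrow> vge v x 1) \<Longrightarrow> vge v (complete_hom xs d) (int d)"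
proof (induction xs d rule: complete_hom.induct)
  case (4 x xs d)
  have "vge v (x * complete_hom (x # xs) d) (1 + int d)" using 4 by (intro vge_mult) auto
  then show ?case using 4 by (simp add: vge_add add.commute)
qed (auto simp: vge_def)

lemma ps_zeros_length_le:
  assumes "c N \<noteq> 0" and dominant: "\<And>n. N < n \<Longrightarrow> c n \<noteq> 0 \<Longrightarrow> v (c N) + int N < v (c n) + int n"
    and "distinct xs" and "set xs \<subseteq> ps_zeros v c"
  shows "length xs \<le> N"
proof (rule ccontr)
  assume "\<not> length xs \<le> N"
  define ys where "ys = take (Suc N) xs"
  have ys: "distinct ys" "length ys = Suc N" "set ys \<subseteq> ps_zeros v c"
    using assms(3,4) \<open>\<not> length xs \<le> N\<close> set_take_subset[of "Suc N" xs] unfolding ys_def by auto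
  define s where "s M x = (\<Sum>n<M. c n * x ^ n)" for M x
  have "vconv v (\<lambda>M. divided_diff (s M) ys) 0"
    using ys(3) by (intro vconv_divided_diff) (auto simp: ps_zeros_def s_def)
  then obtain M0 where M0: "\<forall>M\<ge>M0. vge v (divided_diff (s M) ys - 0) (v (c N) + 1)"
    unfolding vconv_def by blast
  define M where "M = max M0 (Suc N)"
  have M: "N < M" "vge v (divided_diff (s M) ys) (v (c N) + 1)"
    using M0 unfolding M_def by auto
  define R where "R = (\<Sum>n\<in>{N<..<M}. c n * complete_hom ys (n - N))"
  have "divided_diff (s M) ys = c N + R"
    unfolding s_def R_def using divided_diff_polynomial[OF ys(1,2) M(1)] .
  moreover have "vge v R (v (c N) + 1)"
    unfolding R_def
  proof (rule vge_sum)
    fix n assume "n \<in> {N<..<M}"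
    have "vge v (c n * complete_hom ys (n - N)) (v (c n) + int (n - N))"
      using ys(3) by (intro vge_mult vge_self vge_complete_hom) (auto simp: ps_zeros_def)
    then show "vge v (c n * complete_hom ys (n - N)) (v (c N) + 1)"
      using dominant[of n] \<open>n \<in> {N<..<M}\<close> by (cases "c n = 0") (auto intro: vge_mono)
  qed
  ultimately have "vge v (c N) (v (c N) + 1)"
    using vge_diff[OF M(2)] by fastforce
  then show False using \<open>c N \<noteq> 0\<close> by (simp add: vge_def)
qed

lemma card_ps_zeros_le:
  assumes "c N \<noteq> 0" and "\<And>n. N < n \<Longrightarrow> c n \<noteq> 0 \<Longrightarrow> v (c N) + int N < v (c n) + int n"
  shows "finite (ps_zeros v c) \<and> card (ps_zeros v c) \<le> N"
proof (rule finite_if_finite_subsets_card_bdd)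
  fix Z assume "Z \<subseteq> ps_zeros v c" "finite Z"
  then obtain xs where "set xs = Z" "distinct xs" "length xs = card Z"
    using finite_distinct_list distinct_card by metis
  then show "card Z \<le> N"
    using ps_zeros_length_le[OF assms] \<open>Z \<subseteq> ps_zeros v c\<close> by metis
qed

end

locale padic_valuation = nonarch_valuation v for v :: "'a::field_char_0 \<Rightarrow> int" +
  fixes p :: nat
  assumes prime_p: "prime p" and v_p: "v (of_nat p) = 1"
begin

lemma v_of_nat_coprime:
  assumes "\<not> p dvd k"
  shows "v (of_nat k) = 0"
proof (rule ccontr)
  assume "v (of_nat k) \<noteq> 0"
  have "k \<noteq> 0" using assms by (cases k) auto
  then have "vge v (of_nat k :: 'a) 1"
    using vge_of_nat[of k] \<open>v (of_nat k) \<noteq> 0\<close> by (simp add: vge_def)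
  obtain u w :: int where "u * int k + w * int p = 1"
    using bezout_int[of "int k" "int p"] prime_imp_coprime[OF prime_p assms]
    by (metis coprime_imp_gcd_eq_1 gcd.commute coprime_int_iff)
  then have "(1::'a) = of_int u * of_nat k + of_int w * of_nat p"
    by (metis of_int_1 of_int_add of_int_mult of_int_of_nat_eq)
  also have "vge v \<dots> (0 + 1)"
    using \<open>vge v (of_nat k) 1\<close> v_p
    by (intro vge_add vge_mult vge_of_int) (auto simp: vge_def)
  finally show False by (simp add: vge_def)
qed

lemma v_fact_nonneg: "0 \<le> v (fact n :: 'a)"
  using vge_of_nat[of "fact n"] by (simp add: vge_def)

lemma v_fact_Legendre: "v (fact n :: 'a) = int (n div p) + v (fact (n div p) :: 'a)"
proof (induction n)
  case (Suc n)
  have p1: "p > 1" using prime_p prime_gt_1_nat by blast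
  have v_fact_Suc: "v (fact (Suc m) :: 'a) = v (of_nat (Suc m) :: 'a) + v (fact m :: 'a)" for m
    by (simp only: fact_Suc of_nat_mult) (rule v_mult; simp del: of_nat_Suc)
  show ?case
  proof (cases "p dvd Suc n")
    case True
    then obtain j where j: "Suc n = p * j" by blast
    then have "j \<noteq> 0" by (cases j) auto
    have "Suc n div p = j" "n div p = j - 1"
      using j p1 \<open>j \<noteq> 0\<close> by (auto intro!: div_nat_eqI simp: algebra_simps)
    moreover have "v (of_nat (Suc n) :: 'a) = 1 + v (of_nat j :: 'a)"
      unfolding j of_nat_mult using p1 \<open>j \<noteq> 0\<close> v_p by (subst v_mult) auto
    moreover have "v (fact j :: 'a) = v (of_nat j :: 'a) + v (fact (j - 1) :: 'a)"
      using v_fact_Suc[of "j - 1"] \<open>j \<noteq> 0\<close> by simp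
    ultimately show ?thesis using Suc.IH v_fact_Suc[of n] \<open>j \<noteq> 0\<close> by simp
  next
    case False
    then have "Suc n div p = n div p" by (simp add: div_Suc dvd_eq_mod_eq_0)
    then show ?thesis using Suc.IH v_fact_Suc[of n] v_of_nat_coprime[OF False] by simp
  qed
qed simp

lemma v_fact_le: "(int p - 1) * v (fact n :: 'a) \<le> int n"
proof (induction n rule: less_induct)
  case (less n)
  show ?case
  proof (cases "n = 0")
    case False
    define q where "q = n div p"
    have "q < n" using False prime_gt_1_nat[OF prime_p] unfolding q_def by simp
    have "(int p - 1) * v (fact n :: 'a) = (int p - 1) * int q + (int p - 1) * v (fact q :: 'a)"
      unfolding q_def v_fact_Legendre[of n] by (simp add: algebra_simps)
    also have "\<dots> \<le> int p * int q" using less[OF \<open>q < n\<close>] by (simp add: algebra_simps)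
    also have "\<dots> \<le> int n" unfolding q_def by (metis of_nat_le_iff of_nat_mult times_div_less_eq_dividend)
    finally show ?thesis .
  qed simp
qed

lemma v_fact_le_half:
  assumes "odd p"
  shows "2 * v (fact n :: 'a) \<le> int n"
proof -
  have "2 \<le> int p - 1" using prime_gt_1_nat[OF prime_p] \<open>odd p\<close> by presburger
  then have "2 * v (fact n :: 'a) \<le> (int p - 1) * v (fact n :: 'a)"
    using v_fact_nonneg by (rule mult_right_mono)
  then show ?thesis using v_fact_le[of n] by linarith
qed

lemma card_dp_zeros_le:
  assumes "odd p" and "dp_integral v a" and "a m \<noteq> 0"
  shows "finite (dp_zeros v a) \<and> card (dp_zeros v a) \<le> 2 * nat (v (a m) + int m)"
proof -
  define c where "c n = a n / fact n" for n
  define W where "W n = v (c n) + int n" for n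
  have c_nonzero: "c n \<noteq> 0 \<longleftrightarrow> a n \<noteq> 0" for n by (simp add: c_def)
  have v_c: "v (c n) = v (a n) - v (fact n :: 'a)" if "a n \<noteq> 0" for n
    unfolding c_def using that by (simp add: v_divide)
  have W_lower: "int n \<le> 2 * W n" if "c n \<noteq> 0" for n
    using assms(2) that v_c[of n] v_fact_le_half[OF \<open>odd p\<close>, of n]
    unfolding c_nonzero dp_integral_def vge_def W_def by fastforce
  have "{n. c n \<noteq> 0 \<and> W n \<le> W m} \<subseteq> {..nat (2 * W m)}"
  proof
    fix n assume "n \<in> {n. c n \<noteq> 0 \<and> W n \<le> W m}"
    then have "int n \<le> 2 * W m" using W_lower[of n] by auto
    then show "n \<in> {..nat (2 * W m)}" by simp
  qed
  then have "finite {n. c n \<noteq> 0 \<and> W n \<le> W m}" by (rule finite_subset) simp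
  then obtain N where N: "c N \<noteq> 0" "W N \<le> W m" "\<And>n. N < n \<Longrightarrow> c n \<noteq> 0 \<Longrightarrow> W N < W n"
    using obtain_last_minimiser[of "\<lambda>n. c n \<noteq> 0" m W] c_nonzero assms(3) by blast
  have "dp_zeros v a = ps_zeros v c"
    unfolding dp_zeros_def ps_zeros_def c_def by simp
  moreover have "finite (ps_zeros v c) \<and> card (ps_zeros v c) \<le> N"
    using N by (intro card_ps_zeros_le) (auto simp: W_def)
  moreover have "int N \<le> 2 * (v (a m) + int m)"
    using W_lower[OF N(1)] N(2) v_c[OF assms(3)] v_fact_nonneg[of m]
    unfolding W_def distrib_left by linarith
  ultimately show ?thesis by auto
qed

end

theorem lemma2p4:
  fixes v :: "'a::field_char_0 \<Rightarrow> int" and p :: nat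
  assumes "prime p" and "odd p" and "unram_padic_field p v"
  shows "(\<forall>a. dp_integral v a \<and> (\<exists>n. a n \<noteq> 0) \<longrightarrow> finite (dp_zeros v a)) \<and>
         (\<forall>k::nat. k \<ge> 1 \<longrightarrow> (\<forall>g. dp_integral v g \<and> (\<exists>n. \<not> vcong v (g n) 0 k) \<longrightarrow>
            (\<exists>N::nat. \<forall>a. dp_integral v a \<and> (\<forall>n. vcong v (a n) (g n) k) \<longrightarrow>
               finite (dp_zeros v a) \<and> card (dp_zeros v a) \<le> N)))"
proof -
  interpret padic_valuation v p
    using assms unfolding unram_padic_field_def by unfold_locales auto
  have bounded: "finite (dp_zeros v a) \<and> card (dp_zeros v a) \<le> 2 * (k + m)"
    if "dp_integral v a" "vcong v (a m) (g m) k" "\<not> vcong v (g m) 0 k" for a g k m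
  proof -
    have "a m \<noteq> 0" "v (a m) < int k" using not_vcong_zero[OF that(2,3)] by auto
    then show ?thesis using card_dp_zeros_le[OF \<open>odd p\<close> that(1)] by fastforce
  qed
  show ?thesis
    using card_dp_zeros_le[OF \<open>odd p\<close>] bounded by blast
qed

end
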